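(* Let $x_k\in\mathbb{R}^n_{>0}$ satisfy $\mathbf 1^Tx_k\le(1+\epsilon)\mathrm{OPT}$. Then for every $t\in\{0,\dots,w-1\}$ and every $u\in\mathbb{R}^n_{\ge0}$, $$\langle\alpha\,\xi^{(t)}_k,\ x_k-u\rangle\le \alpha^2\,\mathrm{OPT}+V_{x_k}(u)-V_{x^{(t)}_{k+1}}(u).$$
   Context: Standing setup: $A\in\mathbb{R}^{m\times n}_{\ge 0}$ with no zero column; packing LP $\max\{\mathbf 1^Tx:x\ge0,Ax\le\mathbf 1\}$ with optimal value $\mathrm{OPT}$; $\epsilon\in(0,1/2]$; natural $\log$ unless $\log_2$. $\mu=\frac{\epsilon}{4\log(nm/\epsilon)}$, $p_j(x)=\exp\big(\frac{1}{\mu}((Ax)_j-1)\big)$, $f_\mu(x)=-\mathbf 1^Tx+\mu\sum_j p_j(x)$, $\nabla_i f_\mu(x)=-1+\sum_jA_{ji}p_j(x)$, $\alpha=\mu/20$, $w=\lceil\log_2(1/\epsilon)\rceil$. With $g_i=\nabla_i f_\mu(x_k)$: $\xi_k[i]=0$ if $|g_i|\le\epsilon$, $\xi_k[i]=g_i$ if $\epsilon<|g_i|\le1$, $\xi_k[i]=1$ if $g_i>1$; $\xi^{(t)}_k[i]=\xi_k[i]$ if $\epsilon2^t<|\xi_k[i]|\le\epsilon2^{t+1}$ and $0$ otherwise; $x^{(t)}_{k+1}[i]=x_k[i]\exp(-\alpha\xi^{(t)}_k[i])$. Bregman divergence: $V_x(y)=\sum_{i\in[n]}\big(y[i]\log\frac{y[i]}{x[i]}+x[i]-y[i]\big)$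 for $x>0$, $y\ge 0$ (with $0\log0=0$). *)

theory Defs
  imports Complex_Main
begin

text \<open>Matrices A in R^(m x n) are functions nat => nat => real, entry A j i for j < m, i < n.
  Vectors in R^n are functions nat => real, only indices i < n matter.\<close>

definition Ax :: "(nat \<Rightarrow> nat \<Rightarrow> real) \<Rightarrow> nat \<Rightarrow> (nat \<Rightarrow> real) \<Rightarrow> nat \<Rightarrow> real" where
  "Ax A n x j = (\<Sum>i<n. A j i * x i)"

definition packing_OPT :: "(nat \<Rightarrow> nat \<Rightarrow> real) \<Rightarrow> nat \<Rightarrow> nat \<Rightarrow> real" where
  "packing_OPT A m n = Sup {(\<Sum>i<n. x i) | x. (\<forall>i<n. 0 \<le> x i) \<and> (\<forall>j<m. Ax A n x j \<le> 1)}"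

definition mu_param :: "real \<Rightarrow> nat \<Rightarrow> nat \<Rightarrow> real" where
  "mu_param \<epsilon> n m = \<epsilon> / (4 * ln (real n * real m / \<epsilon>))"

definition pfun :: "(nat \<Rightarrow> nat \<Rightarrow> real) \<Rightarrow> nat \<Rightarrow> real \<Rightarrow> (nat \<Rightarrow> real) \<Rightarrow> nat \<Rightarrow> real" where
  "pfun A n \<mu> x j = exp ((1 / \<mu>) * (Ax A n x j - 1))"

definition grad_f :: "(nat \<Rightarrow> nat \<Rightarrow> real) \<Rightarrow> nat \<Rightarrow> nat \<Rightarrow> real \<Rightarrow> (nat \<Rightarrow> real) \<Rightarrow> nat \<Rightarrow> real" where
  "grad_f A m n \<mu> x i = -1 + (\<Sum>j<m. A j i * pfun A n \<mu> x j)"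

text \<open>Truncation of a gradient coordinate (the gradient is always at least -1).\<close>
definition xi_trunc :: "real \<Rightarrow> real \<Rightarrow> real" where
  "xi_trunc \<epsilon> g = (if \<bar>g\<bar> \<le> \<epsilon> then 0 else if g > 1 then 1 else g)"

definition xi_k :: "(nat \<Rightarrow> nat \<Rightarrow> real) \<Rightarrow> nat \<Rightarrow> nat \<Rightarrow> real \<Rightarrow> (nat \<Rightarrow> real) \<Rightarrow> nat \<Rightarrow> real" where
  "xi_k A m n \<epsilon> x i = xi_trunc \<epsilon> (grad_f A m n (mu_param \<epsilon> n m) x i)"

definition xi_kt :: "(nat \<Rightarrow> nat \<Rightarrow> real) \<Rightarrow> nat \<Rightarrow> nat \<Rightarrow> real \<Rightarrow> nat \<Rightarrow> (nat \<Rightarrow> real) \<Rightarrow> nat \<Rightarrow> real" where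
  "xi_kt A m n \<epsilon> t x i =
     (let v = xi_k A m n \<epsilon> x i in
      if \<epsilon> * 2 ^ t < \<bar>v\<bar> \<and> \<bar>v\<bar> \<le> \<epsilon> * 2 ^ (t + 1) then v else 0)"

definition alpha_param :: "real \<Rightarrow> nat \<Rightarrow> nat \<Rightarrow> real" where
  "alpha_param \<epsilon> n m = mu_param \<epsilon> n m / 20"

definition x_next :: "(nat \<Rightarrow> nat \<Rightarrow> real) \<Rightarrow> nat \<Rightarrow> nat \<Rightarrow> real \<Rightarrow> nat \<Rightarrow> (nat \<Rightarrow> real) \<Rightarrow> nat \<Rightarrow> real" where
  "x_next A m n \<epsilon> t x i = x i * exp (- alpha_param \<epsilon> n m * xi_kt A m n \<epsilon> t x i)"

definition w_param :: "real \<Rightarrow> int" where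
  "w_param \<epsilon> = \<lceil>log 2 (1 / \<epsilon>)\<rceil>"

text \<open>Bregman divergence; for y i = 0 the term y i * ln(...) is 0, matching 0 log 0 = 0.\<close>
definition bregman :: "nat \<Rightarrow> (nat \<Rightarrow> real) \<Rightarrow> (nat \<Rightarrow> real) \<Rightarrow> real" where
  "bregman n x y = (\<Sum>i<n. y i * ln (y i / x i) + x i - y i)"

end

theory Submission
  imports Defs
begin

text \<open>The update is a mirror-descent step with the entropy mirror map, so the Bregman
  three-point identity holds coordinatewise up to the error term
  \<open>x (e\<^sup>-\<^sup>a - 1 + a)\<close> with \<open>a = \<alpha> \<xi>\<^sub>i\<close>. Since the truncated gradient satisfies
  \<open>|\<xi>\<^sub>i| \<le> 1\<close> and \<open>\<alpha> \<le> 1/4\<close>, this error is at most \<open>(2/3) \<alpha>\<^sup>2 x\<^sub>i\<close>; summing gives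
  \<open>(2/3) \<alpha>\<^sup>2 \<one>\<^sup>Tx\<close>, and \<open>\<one>\<^sup>Tx \<le> (1 + \<epsilon>) OPT \<le> (3/2) OPT\<close>.\<close>

lemma exp_minus_le_quadratic:
  fixes a :: real
  assumes "\<bar>a\<bar> \<le> 1/4"
  shows "exp (-a) \<le> 1 - a + (2/3) * a\<^sup>2"
proof -
  obtain s where "\<bar>s\<bar> \<le> \<bar>a\<bar>" and taylor: "exp (-a) = 1 - a + exp s / 2 * a\<^sup>2"
    using Maclaurin_exp_le[of "-a" 2] by (auto simp: numeral_2_eq_2)
  have "exp s \<le> exp \<bar>a\<bar>"
    using \<open>\<bar>s\<bar> \<le> \<bar>a\<bar>\<close> by simp
  also have "\<dots> \<le> 1 + \<bar>a\<bar> + \<bar>a\<bar>\<^sup>2"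
    using assms by (intro exp_bound) auto
  also have "\<dots> \<le> 4/3"
  proof -
    have "\<bar>a\<bar>\<^sup>2 \<le> (1/4)\<^sup>2"
      using assms by (intro power_mono) auto
    then show ?thesis
      using assms by (simp add: power2_eq_square)
  qed
  finally have "exp s / 2 * a\<^sup>2 \<le> (2/3) * a\<^sup>2"
    by (intro mult_right_mono) auto
  then show ?thesis
    using taylor by linarith
qed

lemma mirror_step_coordinate:
  fixes x u a :: real
  assumes "0 < x" and "0 \<le> u" and "\<bar>a\<bar> \<le> 1/4"
  shows "a * (x - u) \<le> (2/3) * a\<^sup>2 * x
           + ((u * ln (u / x) + x - u) - (u * ln (u / (x * exp (-a))) + x * exp (-a) - u))"
proof -
  have shift: "u * ln (u / (x * exp (-a))) = u * ln (u / x) + a * u"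
  proof (cases "u = 0")
    case False
    with assms have "0 < u / x"
      by simp
    have "u / (x * exp (-a)) = u / x * exp a"
      by (simp add: exp_minus divide_inverse)
    then have "ln (u / (x * exp (-a))) = ln (u / x) + a"
      by (simp only: ln_mult_pos[OF \<open>0 < u / x\<close> exp_gt_zero] ln_exp)
    then show ?thesis
      by (simp add: distrib_left)
  qed simp
  have "x * exp (-a) \<le> x * (1 - a + (2/3) * a\<^sup>2)"
    using exp_minus_le_quadratic[OF assms(3)] assms(1) by (intro mult_left_mono) auto
  then show ?thesis
    unfolding shift by (simp add: algebra_simps)
qed

lemma bregman_mirror_step:
  fixes x u g :: "nat \<Rightarrow> real" and \<alpha> :: real
  assumes "\<forall>i<n. 0 < x i" and "\<forall>i<n. 0 \<le> u i" and "\<forall>i<n. \<bar>g i\<bar> \<le> 1"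
    and "0 \<le> \<alpha>" and "\<alpha> \<le> 1/4"
  shows "(\<Sum>i<n. \<alpha> * g i * (x i - u i))
           \<le> (2/3) * \<alpha>\<^sup>2 * (\<Sum>i<n. x i) + bregman n x u - bregman n (\<lambda>i. x i * exp (- (\<alpha> * g i))) u"
proof -
  have coordinate: "\<alpha> * g i * (x i - u i) \<le> (2/3) * \<alpha>\<^sup>2 * x i
      + ((u i * ln (u i / x i) + x i - u i)
         - (u i * ln (u i / (x i * exp (- (\<alpha> * g i)))) + x i * exp (- (\<alpha> * g i)) - u i))"
    if "i < n" for i
  proof -
    have "\<bar>\<alpha> * g i\<bar> \<le> \<alpha>"
      using assms(3,4) that by (simp add: abs_mult mult_left_le)
    then have "(\<alpha> * g i)\<^sup>2 \<le> \<alpha>\<^sup>2" and "\<bar>\<alpha> * g i\<bar> \<le> 1/4"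
      using assms(5) by (metis abs_ge_zero power2_abs power_mono, linarith)
    moreover have "0 \<le> (2/3) * x i"
      using assms(1) that by (simp add: less_imp_le)
    ultimately have "(2/3) * (\<alpha> * g i)\<^sup>2 * x i \<le> (2/3) * \<alpha>\<^sup>2 * x i"
      using mult_right_mono by (fastforce simp: mult.commute mult.left_commute)
    moreover have "\<alpha> * g i * (x i - u i) \<le> (2/3) * (\<alpha> * g i)\<^sup>2 * x i
        + ((u i * ln (u i / x i) + x i - u i)
           - (u i * ln (u i / (x i * exp (- (\<alpha> * g i)))) + x i * exp (- (\<alpha> * g i)) - u i))"
      using assms(1,2) that \<open>\<bar>\<alpha> * g i\<bar> \<le> 1/4\<close> by (intro mirror_step_coordinate) auto
    ultimately show ?thesis
      by linarith
  qed
  have "(\<Sum>i<n. \<alpha> * g i * (x i - u i)) \<le> (\<Sum>i<n. (2/3) * \<alpha>\<^sup>2 * x i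
      + ((u i * ln (u i / x i) + x i - u i)
         - (u i * ln (u i / (x i * exp (- (\<alpha> * g i)))) + x i * exp (- (\<alpha> * g i)) - u i)))"
    using coordinate by (intro sum_mono) auto
  also have "\<dots> = (2/3) * \<alpha>\<^sup>2 * (\<Sum>i<n. x i) + bregman n x u
                  - bregman n (\<lambda>i. x i * exp (- (\<alpha> * g i))) u"
    unfolding bregman_def by (simp add: sum.distrib sum_subtractf sum_distrib_left sum_negf)
  finally show ?thesis .
qed

lemma ln_two_ge_half: "1/2 \<le> ln (2::real)"
proof -
  have "exp (1/2::real) \<le> 1 + 1/2 + (1/2)\<^sup>2"
    by (intro exp_bound) auto
  also have "\<dots> \<le> 2"
    by (simp add: power2_eq_square)
  finally show ?thesis
    by (metis ln_exp ln_le_cancel_iff exp_gt_zero zero_less_numeral)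
qed

lemma alpha_param_bounds:
  assumes "1 \<le> m" and "1 \<le> n" and "0 < \<epsilon>" and "\<epsilon> \<le> 1/2"
  shows "0 \<le> alpha_param \<epsilon> n m" and "alpha_param \<epsilon> n m \<le> 1/4"
proof -
  define L where "L = ln (real n * real m / \<epsilon>)"
  have "1 \<le> real n * real m"
    using assms(1,2) by (metis mult_le_mono of_nat_1 of_nat_le_iff of_nat_mult mult_1)
  then have "2 \<le> real n * real m / \<epsilon>"
    using assms(3,4) by (simp add: le_divide_eq)
  then have "1/2 \<le> L"
    unfolding L_def using ln_two_ge_half by (smt (verit) ln_le_cancel_iff)
  moreover have alpha: "alpha_param \<epsilon> n m = \<epsilon> / (80 * L)"
    unfolding alpha_param_def mu_param_def L_def by simp
  ultimately show "0 \<le> alpha_param \<epsilon> n m"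
    using assms(3) by simp
  have "\<epsilon> / (80 * L) \<le> \<epsilon> / 40"
    using \<open>1/2 \<le> L\<close> assms(3) by (intro divide_left_mono) auto
  then show "alpha_param \<epsilon> n m \<le> 1/4"
    using alpha assms(4) by linarith
qed

lemma grad_f_ge_minus_one:
  assumes "\<forall>j<m. 0 \<le> A j i"
  shows "-1 \<le> grad_f A m n \<mu> x i"
  using assms unfolding grad_f_def pfun_def by (auto intro!: sum_nonneg)

lemma abs_xi_kt_le_one:
  assumes "\<forall>j<m. 0 \<le> A j i"
  shows "\<bar>xi_kt A m n \<epsilon> t x i\<bar> \<le> 1"
proof -
  have "-1 \<le> grad_f A m n (mu_param \<epsilon> n m) x i"
    by (rule grad_f_ge_minus_one) (rule assms)
  then have "\<bar>xi_k A m n \<epsilon> x i\<bar> \<le> 1"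
    unfolding xi_k_def xi_trunc_def by auto
  then show ?thesis
    unfolding xi_kt_def Let_def by auto
qed

theorem lemma3p7:
  fixes A :: "nat \<Rightarrow> nat \<Rightarrow> real" and m n :: nat and \<epsilon> :: real
    and x u :: "nat \<Rightarrow> real" and t :: nat
  assumes "1 \<le> m" and "1 \<le> n"
    and "\<forall>j<m. \<forall>i<n. 0 \<le> A j i"
    and "\<forall>i<n. \<exists>j<m. A j i \<noteq> 0"
    and "0 < \<epsilon>" and "\<epsilon> \<le> 1/2"
    and "\<forall>i<n. 0 < x i"
    and "(\<Sum>i<n. x i) \<le> (1 + \<epsilon>) * packing_OPT A m n"
    and "int t < w_param \<epsilon>"
    and "\<forall>i<n. 0 \<le> u i"
  shows "(\<Sum>i<n. alpha_param \<epsilon> n m * xi_kt A m n \<epsilon> t x i * (x i - u i))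
           \<le> (alpha_param \<epsilon> n m)^2 * packing_OPT A m n + bregman n x u
              - bregman n (x_next A m n \<epsilon> t x) u"
proof -
  define \<alpha> where "\<alpha> = alpha_param \<epsilon> n m"
  define OPT where "OPT = packing_OPT A m n"
  have "\<forall>i<n. \<bar>xi_kt A m n \<epsilon> t x i\<bar> \<le> 1"
    using assms(3) abs_xi_kt_le_one by blast
  moreover have "x_next A m n \<epsilon> t x = (\<lambda>i. x i * exp (- (\<alpha> * xi_kt A m n \<epsilon> t x i)))"
    unfolding x_next_def \<alpha>_def by auto
  ultimately have step: "(\<Sum>i<n. \<alpha> * xi_kt A m n \<epsilon> t x i * (x i - u i))
      \<le> (2/3) * \<alpha>\<^sup>2 * (\<Sum>i<n. x i) + bregman n x u - bregman n (x_next A m n \<epsilon> t x) u"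
    using bregman_mirror_step[OF assms(7,10)] alpha_param_bounds[OF assms(1,2,5,6)]
    unfolding \<alpha>_def by simp
  have "0 < (\<Sum>i<n. x i)"
    using assms(2,7) by (intro sum_pos) (auto simp: lessThan_empty_iff)
  then have "0 < OPT"
    using assms(5,8) unfolding OPT_def by (smt (verit) mult_nonneg_nonpos)
  have "(2/3) * (\<Sum>i<n. x i) \<le> ((2/3) * (1 + \<epsilon>)) * OPT"
    using assms(8) unfolding OPT_def by (simp add: algebra_simps)
  also have "\<dots> \<le> OPT"
    using \<open>0 < OPT\<close> assms(6) mult_right_mono[of "(2/3) * (1 + \<epsilon>)" 1 OPT] by simp
  finally have "(2/3) * (\<Sum>i<n. x i) \<le> OPT" .
  then have "(2/3) * \<alpha>\<^sup>2 * (\<Sum>i<n. x i) \<le> \<alpha>\<^sup>2 * OPT"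
    by (metis mult.assoc mult.commute mult_left_mono zero_le_power2)
  then show ?thesis
    using step unfolding \<alpha>_def OPT_def by linarith
qed

end
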